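(* Let $\mathbf b=(b_1,b_2)\in\mathbb N^2$ with $\gcd(b_1,b_2)=1$ and $b_\star=\min(b_1,b_2)\ge2$. For every integer $r\ge1$ and every $\boldsymbol\alpha=(\alpha_1,\dots,\alpha_r)\in(0,1)^r$, with $\overline R(n)$ as below, almost surely $$\lim_{n\to\infty}\overline R(n)\ \ge\ \frac1{\zeta(b_\star)}\ \ge\ \frac1{\zeta(2)}=\frac6{\pi^2},$$ where $\zeta$ is the Riemann zeta function.
   Context: $\mathbf b$-visibility: given two distinct lattice points $P=(p_1,p_2)$, $Q=(q_1,q_2)\in\mathbb Z^2$, they determine a curve through both of the form $a_1(y-q_2)^{b_1}=a_2(x-q_1)^{b_2}$ for some $(a_1,a_2)\in\mathbb Q^2\setminus\{(0,0)\}$; $P$ is $\mathbf b$-visible from $Q$ if no other lattice point lies on the segment of this curve between $P$ and $Q$; a point $P\neq(0,0)$ is $\mathbf b$-visible if it is $\mathbf b$-visible from the origin. An $\alpha$-random walk starting at the origin: $P_0=(0,0)$, $P_{i+1}=P_i+(1,0)$ with probability $\alpha$ and $P_{i+1}=P_i+(0,1)$ with probability $1-\alpha$, independently. Given mutually independent $\alpha_j$-random walks $(P^{(j)}_i)$, $1\le j\le r$, let $Y_i=1$ if all $P^{(j)}_i$, $1\le j\le r$, are $\mathbf b$-visible and $Y_i=0$ otherwise, and $\overline R(n)=\frac1n\sum_{i=1}^nY_i$ (the proportion of the first $n$ steps at which all $r$ walkers are simultaneously $\mathbf b$-visible). *)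

theory Defs
  imports "HOL-Probability.Probability"
begin

definition on_curve :: "nat \<times> nat \<Rightarrow> rat \<times> rat \<Rightarrow> int \<times> int \<Rightarrow> int \<times> int \<Rightarrow> bool" where
  "on_curve b a Q R \<longleftrightarrow>
     fst a * of_int ((snd R - snd Q) ^ fst b) = snd a * of_int ((fst R - fst Q) ^ snd b)"

text \<open>The segment of the curve between P and Q consists of the points of the curve lying in
  the closed box spanned by P and Q (on that box the curve is a single monotone arc).\<close>

definition in_box :: "int \<times> int \<Rightarrow> int \<times> int \<Rightarrow> int \<times> int \<Rightarrow> bool" where
  "in_box P Q R \<longleftrightarrow>
     min (fst P) (fst Q) \<le> fst R \<and> fst R \<le> max (fst P) (fst Q) \<and>
     min (snd P) (snd Q) \<le> snd R \<and> snd R \<le> max (snd P) (snd Q)"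

definition b_visible_from :: "nat \<times> nat \<Rightarrow> int \<times> int \<Rightarrow> int \<times> int \<Rightarrow> bool" where
  "b_visible_from b P Q \<longleftrightarrow> P \<noteq> Q \<and>
     (\<forall>a. a \<noteq> (0, 0) \<and> on_curve b a Q P \<longrightarrow>
        \<not> (\<exists>R. R \<noteq> P \<and> R \<noteq> Q \<and> on_curve b a Q R \<and> in_box P Q R))"

definition b_visible :: "nat \<times> nat \<Rightarrow> int \<times> int \<Rightarrow> bool" where
  "b_visible b P \<longleftrightarrow> P \<noteq> (0, 0) \<and> b_visible_from b P (0, 0)"

text \<open>Random walks: the sample point \<omega> assigns to walker j and step k a boolean;
  True means the (k+1)-st step of walker j is (1,0), False means (0,1).\<close>

definition walk_pos :: "(nat \<times> nat \<Rightarrow> bool) \<Rightarrow> nat \<Rightarrow> nat \<Rightarrow> int \<times> int" where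
  "walk_pos \<omega> j i = (int (card {k. k < i \<and> \<omega> (j, k)}), int (card {k. k < i \<and> \<not> \<omega> (j, k)}))"

definition walk_space :: "nat \<Rightarrow> (nat \<Rightarrow> real) \<Rightarrow> (nat \<times> nat \<Rightarrow> bool) measure" where
  "walk_space r \<alpha> = (\<Pi>\<^sub>M ji \<in> {1..r} \<times> UNIV. measure_pmf (bernoulli_pmf (\<alpha> (fst ji))))"

definition Rbar :: "nat \<times> nat \<Rightarrow> nat \<Rightarrow> (nat \<times> nat \<Rightarrow> bool) \<Rightarrow> nat \<Rightarrow> real" where
  "Rbar b r \<omega> n = (1 / real n) *
     (\<Sum>i = 1..n. if (\<forall>j \<in> {1..r}. b_visible b (walk_pos \<omega> j i)) then 1 else 0)"

definition zeta :: "nat \<Rightarrow> real" where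
  "zeta s = (\<Sum>n. 1 / real (Suc n) ^ s)"

end

theory Submission
  imports Defs "HOL-Library.Discrete_Functions"
begin

text \<open>
  For coprime \<open>b1, b2\<close> a point \<open>(X, Y)\<close> with \<open>X, Y \<ge> 1\<close> is \<open>b\<close>-visible iff no prime \<open>p\<close> has
  \<open>p\<^sup>b\<^sup>1 dvd X\<close> and \<open>p\<^sup>b\<^sup>2 dvd Y\<close>. After \<open>i\<close> steps \<open>X + Y = i\<close>, so once all walkers have left the
  axes, every walker is visible at each step \<open>i\<close> that is free of \<open>k\<close>-th powers, \<open>k = min b1 b2\<close>, and
  these steps have lower density at least \<open>1 / \<zeta>(k)\<close>.

  For the convergence of \<open>R(n)\<close>, sieve only by the primes \<open>p \<le> N\<close>: this changes the average by at
  most \<open>1 / N\<close>. The sieved indicator is, by the roots-of-unity filter for \<open>p\<^sup>b dvd X\<close>, a finite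
  linear combination of products, over the walkers \<open>j\<close> and the steps \<open>t < i\<close>, of unimodular
  per-step characters \<open>\<psi>\<^sub>j(\<omega>(j, t))\<close>. The Cesaro
  means of such a product converge almost surely: if its mean per step has modulus \<open>< 1\<close>, the
  second moment of the partial sums is \<open>O(n)\<close>, so Borel--Cantelli along the squares and
  interpolation give the limit 0; otherwise the product is deterministic, a power \<open>L\<^sup>i\<close> with
  \<open>|L| = 1\<close>.
\<close>

section \<open>Averages of bounded sequences\<close>

lemma sum_power_inj_le:
  fixes \<rho> :: real
  assumes "0 \<le> \<rho>" "\<rho> < 1" "finite A" "inj_on g A"
  shows "(\<Sum>x\<in>A. \<rho> ^ g x) \<le> 1 / (1 - \<rho>)"
proof -
  have "(\<Sum>x\<in>A. \<rho> ^ g x) = (\<Sum>d\<in>g ` A. \<rho> ^ d)" using assms(4) by (simp add: sum.reindex)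
  also have "\<dots> \<le> (\<Sum>d. \<rho> ^ d)"
    by (rule sum_le_suminf) (use assms in \<open>auto intro: summable_geometric\<close>)
  also have "\<dots> = 1 / (1 - \<rho>)" using assms by (simp add: suminf_geometric)
  finally show ?thesis .
qed

lemma sum_power_dist_le:
  fixes \<rho> :: real
  assumes "0 \<le> \<rho>" "\<rho> < 1"
  shows "(\<Sum>i'\<in>{1..n}. \<rho> ^ (if i' \<le> i then i - i' else i' - i)) \<le> 2 / (1 - \<rho>)"
proof -
  let ?d = "\<lambda>i'. if i' \<le> i then i - i' else i' - i"
  let ?A = "{1..n} \<inter> {..i}" and ?B = "{1..n} - {..i}"
  have "(\<Sum>i'\<in>{1..n}. \<rho> ^ ?d i') = (\<Sum>i'\<in>?A. \<rho> ^ (i - i')) + (\<Sum>i'\<in>?B. \<rho> ^ (i' - i))"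
    by (subst sum.Int_Diff[where B = "{..i}"]) (auto intro!: arg_cong2[where f = "(+)"] sum.cong)
  also have "\<dots> \<le> 1 / (1 - \<rho>) + 1 / (1 - \<rho>)"
    by (intro add_mono sum_power_inj_le) (use assms in \<open>auto simp: inj_on_def\<close>)
  finally show ?thesis by simp
qed

lemma norm_sum_le_floor_sqrt_part:
  fixes a :: "nat \<Rightarrow> 'a::real_normed_vector"
  assumes bounded: "\<And>i. norm (a i) \<le> 1"
  shows "norm (\<Sum>i\<in>{1..n}. a i) \<le> norm (\<Sum>i\<in>{1..(floor_sqrt n)\<^sup>2}. a i) + 2 * real (floor_sqrt n)"
proof -
  define s where "s = floor_sqrt n"
  have s: "s\<^sup>2 \<le> n" "n < (Suc s)\<^sup>2" unfolding s_def by (auto intro: Suc_floor_sqrt_power2_gt)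
  have "(\<Sum>i\<in>{1..n}. a i) = (\<Sum>i\<in>{1..s\<^sup>2}. a i) + (\<Sum>i\<in>{s\<^sup>2 + 1..n}. a i)"
    using sum.ub_add_nat[of 1 "s\<^sup>2" a "n - s\<^sup>2"] s(1) by simp
  then have "norm (\<Sum>i\<in>{1..n}. a i) \<le> norm (\<Sum>i\<in>{1..s\<^sup>2}. a i) + norm (\<Sum>i\<in>{s\<^sup>2 + 1..n}. a i)"
    by (simp add: norm_triangle_ineq)
  also have "norm (\<Sum>i\<in>{s\<^sup>2 + 1..n}. a i) \<le> real (card {s\<^sup>2 + 1..n})"
    using sum_norm_le[of "{s\<^sup>2 + 1..n}" a "\<lambda>_. 1"] bounded by simp
  also have "\<dots> \<le> 2 * real s" using s(2) by (simp add: power2_eq_square)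
  finally show ?thesis by (simp add: s_def)
qed

lemma cesaro_null_of_squares:
  fixes a :: "nat \<Rightarrow> 'a::real_normed_field"
  assumes bounded: "\<And>i. norm (a i) \<le> 1"
    and squares: "\<And>q::nat. eventually
      (\<lambda>m. norm (\<Sum>i\<in>{1..(Suc m)\<^sup>2}. a i) < real ((Suc m)\<^sup>2) / real (Suc q)) sequentially"
  shows "(\<lambda>n. (\<Sum>i\<in>{1..n}. a i) / of_nat n) \<longlonglongrightarrow> 0"
proof (rule LIMSEQ_I)
  fix e :: real assume e: "0 < e"
  obtain q :: nat where q: "inverse (real (Suc q)) < e / 2"
    using reals_Archimedean[of "e/2"] e by auto
  obtain m0 where m0: "\<And>m. m \<ge> m0 \<Longrightarrow>
      norm (\<Sum>i\<in>{1..(Suc m)\<^sup>2}. a i) < real ((Suc m)\<^sup>2) / real (Suc q)"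
    using squares[of q] unfolding eventually_sequentially by blast
  obtain K :: nat where K: "4 / e < real K" using reals_Archimedean2 by blast
  show "\<exists>N. \<forall>n\<ge>N. norm ((\<Sum>i\<in>{1..n}. a i) / of_nat n - 0) < e"
  proof (intro exI[of _ "(m0 + K + 2)\<^sup>2"] allI impI)
    fix n assume n: "(m0 + K + 2)\<^sup>2 \<le> n"
    define s where "s = floor_sqrt n"
    have "s\<^sup>2 \<le> n" unfolding s_def by simp
    have sge: "s \<ge> m0 + K + 2" unfolding s_def using n by (rule le_floor_sqrtI)
    have "norm (\<Sum>i\<in>{1..s\<^sup>2}. a i) < real (s\<^sup>2) * inverse (real (Suc q))"
      using m0[of "s - 1"] sge by (simp add: Suc_diff_Suc field_simps)
    also have "\<dots> \<le> real (s\<^sup>2) * (e / 2)" using q by (intro mult_left_mono) auto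
    finally have head: "norm (\<Sum>i\<in>{1..s\<^sup>2}. a i) < real (s\<^sup>2) * (e / 2)" .
    have "4 / e < real s" using K sge by linarith
    then have "real s * 4 \<le> real s * (real s * e)" using e by (intro mult_left_mono) (auto simp: field_simps)
    then have "2 * real s \<le> real (s\<^sup>2) * (e / 2)" by (simp add: power2_eq_square)
    then have "norm (\<Sum>i\<in>{1..n}. a i) < real (s\<^sup>2) * e"
      using head norm_sum_le_floor_sqrt_part[of a n, OF bounded] unfolding s_def by linarith
    also have "\<dots> \<le> real n * e" using \<open>s\<^sup>2 \<le> n\<close> e by (intro mult_right_mono) auto
    finally have "norm (\<Sum>i\<in>{1..n}. a i) < real n * e" .
    moreover have "n > 0" using n by (auto intro: Nat.gr0I)
    ultimately show "norm ((\<Sum>i\<in>{1..n}. a i) / of_nat n - 0) < e"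
      by (simp add: norm_divide divide_less_eq mult.commute)
  qed
qed

lemma cesaro_convergent_unimodular_power:
  fixes L :: "'a::real_normed_field"
  assumes "norm L = 1"
  shows "convergent (\<lambda>n. (\<Sum>i\<in>{1..n}. L ^ i) / of_nat n)"
proof (cases "L = 1")
  case True
  have "(\<lambda>n. (\<Sum>i\<in>{1..n}. L ^ i) / of_nat n) \<longlonglongrightarrow> 1"
  proof (rule Lim_transform_eventually[OF tendsto_const])
    show "\<forall>\<^sub>F n in sequentially. 1 = (\<Sum>i\<in>{1..n}. L ^ i) / of_nat n"
      using eventually_ge_at_top[of 1] by eventually_elim (simp add: True)
  qed
  then show ?thesis by (rule convergentI)
next
  case False
  have bounded: "norm (\<Sum>i\<in>{1..n}. L ^ i) \<le> 2 / norm (1 - L)" for n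
  proof (cases "n \<ge> 1")
    case True
    have "(1 - L) * (\<Sum>i\<in>{1..n}. L ^ i) = L ^ 1 - L ^ Suc n"
      by (rule sum_gp_multiplied) (use True in auto)
    then have "norm (1 - L) * norm (\<Sum>i\<in>{1..n}. L ^ i) = norm (L - L ^ Suc n)"
      by (simp flip: norm_mult)
    also have "\<dots> \<le> norm L + norm (L ^ Suc n)" by (rule norm_triangle_ineq4)
    also have "\<dots> = 2" using assms by (simp add: norm_power norm_mult)
    finally show ?thesis using False by (simp add: field_simps)
  qed simp
  have "(\<lambda>n. (\<Sum>i\<in>{1..n}. L ^ i) / of_nat n) \<longlonglongrightarrow> 0"
  proof (rule Lim_null_comparison)
    show "\<forall>\<^sub>F n in sequentially. norm ((\<Sum>i\<in>{1..n}. L ^ i) / of_nat n) \<le> (2 / norm (1 - L)) / real n"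
      using divide_right_mono[OF bounded, of "real _"] by (intro always_eventually allI) (simp add: norm_divide)
  qed (rule lim_const_over_n)
  then show ?thesis by (rule convergentI)
qed

lemma unimodular_convex_combination_eq:
  fixes u v :: complex and a :: real
  assumes "0 < a" "a < 1" "cmod u = 1" "cmod v = 1" "cmod (of_real a * u + of_real (1 - a) * v) = 1"
  shows "u = v"
proof -
  have "complex_of_real ((cmod (of_real a * u + of_real (1 - a) * v))\<^sup>2 + a * (1 - a) * (cmod (u - v))\<^sup>2)
      = of_real (a * (cmod u)\<^sup>2 + (1 - a) * (cmod v)\<^sup>2)"
    unfolding of_real_add of_real_mult complex_norm_square by (simp add: algebra_simps)
  then have "(cmod (of_real a * u + of_real (1 - a) * v))\<^sup>2 + a * (1 - a) * (cmod (u - v))\<^sup>2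
      = a * (cmod u)\<^sup>2 + (1 - a) * (cmod v)\<^sup>2"
    by (simp only: of_real_eq_iff)
  then have "a * (1 - a) * (cmod (u - v))\<^sup>2 = 0" using assms by simp
  then show ?thesis using assms by simp
qed

lemma prod_ge_1_factor_eq_1:
  fixes g :: "'a \<Rightarrow> real"
  assumes "finite A" "\<And>j. j \<in> A \<Longrightarrow> 0 \<le> g j" "\<And>j. j \<in> A \<Longrightarrow> g j \<le> 1" "(\<Prod>j\<in>A. g j) \<ge> 1" "j \<in> A"
  shows "g j = 1"
proof -
  have "(\<Prod>j\<in>A. g j) = g j * (\<Prod>k\<in>A - {j}. g k)" using assms by (simp add: prod.remove)
  also have "\<dots> \<le> g j" using assms by (intro mult_right_le_one_le prod_le_1 prod_nonneg) auto
  finally show ?thesis using assms by force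
qed

lemma convergent_approx_by_convergent:
  fixes A :: "nat \<Rightarrow> real" and B :: "nat \<Rightarrow> nat \<Rightarrow> real" and T :: real
  assumes conv: "\<And>N. convergent (B N)" and T: "0 \<le> T"
    and close: "\<And>N n. N \<ge> 1 \<Longrightarrow> n \<ge> 1 \<Longrightarrow> \<bar>A n - B N n\<bar> \<le> T / real n + 1 / real N"
  shows "convergent A"
proof -
  have "Cauchy A"
  proof (rule metric_CauchyI)
    fix e :: real assume e: "0 < e"
    obtain N' :: nat where "inverse (real (Suc N')) < e / 4" using reals_Archimedean[of "e/4"] e by auto
    then have N: "Suc N' \<ge> 1" "1 / real (Suc N') < e / 4" by (auto simp: inverse_eq_divide)
    obtain M0 where M0: "\<And>m n. m \<ge> M0 \<Longrightarrow> n \<ge> M0 \<Longrightarrow> dist (B (Suc N') m) (B (Suc N') n) < e / 4"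
      using convergent_Cauchy[OF conv] e by (meson metric_CauchyD divide_pos_pos zero_less_numeral)
    obtain M1 :: nat where M1: "T / (e / 8) < real M1" using reals_Archimedean2 by blast
    have small: "T / real n < e / 8" if "n \<ge> Suc M1" for n
    proof -
      have "T < real M1 * (e / 8)" using M1 e by (simp add: field_simps)
      also have "\<dots> \<le> real n * (e / 8)" using that e by (intro mult_right_mono) auto
      finally show ?thesis using that by (simp add: field_simps)
    qed
    show "\<exists>M. \<forall>m\<ge>M. \<forall>n\<ge>M. dist (A m) (A n) < e"
    proof (intro exI[of _ "max M0 (Suc M1)"] allI impI)
      fix m n assume "max M0 (Suc M1) \<le> m" "max M0 (Suc M1) \<le> n"
      then have "m \<ge> M0" "n \<ge> M0" "m \<ge> Suc M1" "n \<ge> Suc M1" by auto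
      then show "dist (A m) (A n) < e"
        using close[OF N(1), of m] close[OF N(1), of n] M0[of m n] small[of m] small[of n] N(2)
        unfolding dist_real_def by linarith
    qed
  qed
  then show ?thesis by (simp add: Cauchy_convergent_iff)
qed

lemma sum_indicator_eq_card:
  "finite A \<Longrightarrow> (\<Sum>i\<in>A. if P i then 1 else 0 :: real) = real (card {i\<in>A. P i})"
  by (simp add: sum.If_cases Int_def conj_commute)

section \<open>Visibility and prime powers\<close>

lemma coprime_balance_ge:
  fixes b1 b2 :: nat and d e :: int
  assumes cop: "coprime b1 b2" and b1: "b1 \<ge> 1" and balance: "int b2 * d = int b1 * e" and d: "d > 0"
  shows "d \<ge> int b1 \<and> e \<ge> int b2"
proof
  have "int b1 dvd int b2 * d" using balance by simp
  then have "int b1 dvd d" using cop by (simp add: coprime_dvd_mult_right_iff)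
  then show d_ge: "d \<ge> int b1" using d by (simp add: zdvd_imp_le)
  then have "int b1 * e \<ge> int b1 * int b2" using balance by (metis mult.commute mult_left_mono of_nat_0_le_iff)
  then show "e \<ge> int b2" using b1 by simp
qed

lemma prime_power_dvd_of_curve_point:
  fixes X Y u v b1 b2 :: nat
  assumes cop: "coprime b1 b2" and b1: "b1 \<ge> 1"
    and u: "u \<ge> 1" and v: "v \<ge> 1" and uX: "u \<le> X" and vY: "v \<le> Y" and ne: "(u, v) \<noteq> (X, Y)"
    and eq: "v ^ b1 * X ^ b2 = Y ^ b1 * u ^ b2"
  shows "\<exists>p. prime p \<and> p ^ b1 dvd X \<and> p ^ b2 dvd Y"
proof -
  have X0: "X \<noteq> 0" and Y0: "Y \<noteq> 0" and u0: "u \<noteq> 0" and v0: "v \<noteq> 0"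
    using u v uX vY by auto
  obtain p where p: "prime p" and lt: "multiplicity p u < multiplicity p X"
  proof -
    have "\<not> X dvd u"
    proof
      assume "X dvd u"
      then have "u = X" using uX u0 dvd_imp_le by (simp add: le_antisym)
      then have "v ^ b1 = Y ^ b1" using eq X0 by simp
      then have "v = Y" using b1 power_eq_iff_eq_base[of b1 v Y] by simp
      with \<open>u = X\<close> ne show False by simp
    qed
    then have "\<exists>p. prime p \<and> \<not> multiplicity p X \<le> multiplicity p u"
      using multiplicity_le_imp_dvd[OF X0, of u] by blast
    then show thesis using that by (auto simp: not_le)
  qed
  define dX dY where "dX = int (multiplicity p X) - int (multiplicity p u)"
    and "dY = int (multiplicity p Y) - int (multiplicity p v)"
  have "b1 * multiplicity p v + b2 * multiplicity p X = b1 * multiplicity p Y + b2 * multiplicity p u"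
  proof -
    have "multiplicity p (v ^ b1 * X ^ b2) = multiplicity p (Y ^ b1 * u ^ b2)" using eq by simp
    then show ?thesis using X0 Y0 u0 v0 p
      by (simp add: prime_elem_multiplicity_mult_distrib prime_elem_multiplicity_power_distrib)
  qed
  then have "int b2 * dX = int b1 * dY"
    unfolding dX_def dY_def right_diff_distrib by (simp add: algebra_simps flip: of_nat_mult of_nat_add)
  moreover have "dX > 0" using lt by (simp add: dX_def)
  ultimately have "dX \<ge> int b1 \<and> dY \<ge> int b2" by (rule coprime_balance_ge[OF cop b1])
  then have "b1 \<le> multiplicity p X" "b2 \<le> multiplicity p Y" unfolding dX_def dY_def by linarith+
  then have "p ^ b1 dvd X" "p ^ b2 dvd Y"
    using X0 Y0 p power_dvd_iff_le_multiplicity[of X p b1] power_dvd_iff_le_multiplicity[of Y p b2]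
    by (auto dest: prime_gt_1_nat)
  then show ?thesis using p by blast
qed

lemma on_curve_origin_cross_eq:
  assumes a: "a \<noteq> (0, 0)" and x: "x \<noteq> 0"
    and P: "on_curve (b1, b2) a (0, 0) (x, y)" and R: "on_curve (b1, b2) a (0, 0) (u, v)"
  shows "v ^ b1 * x ^ b2 = y ^ b1 * u ^ b2"
proof -
  obtain a1 a2 where a12: "a = (a1, a2)" by (cases a)
  have P': "a1 * of_int (y ^ b1) = a2 * of_int (x ^ b2)"
    and R': "a1 * of_int (v ^ b1) = a2 * of_int (u ^ b2)"
    using P R by (simp_all add: on_curve_def a12)
  have "a1 \<noteq> 0" using P' a x by (auto simp: a12)
  have "a1 * of_int (v ^ b1 * x ^ b2) = a2 * of_int (x ^ b2) * of_int (u ^ b2)"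
    using R' by (simp add: ac_simps)
  also have "\<dots> = a1 * of_int (y ^ b1 * u ^ b2)" using P' by (simp add: ac_simps)
  finally show ?thesis using \<open>a1 \<noteq> 0\<close> by (simp only: mult_cancel_left of_int_eq_iff) simp
qed

lemma not_b_visible_if_prime_power_dvd:
  fixes X Y b1 b2 p :: nat
  assumes b1: "b1 \<ge> 1" and X: "X \<ge> 1" and Y: "Y \<ge> 1"
    and p: "prime p" and pX: "p ^ b1 dvd X" and pY: "p ^ b2 dvd Y"
  shows "\<not> b_visible (b1, b2) (int X, int Y)"
proof
  assume vis: "b_visible (b1, b2) (int X, int Y)"
  obtain X' where XX: "X = p ^ b1 * X'" using pX by (rule dvdE)
  obtain Y' where YY: "Y = p ^ b2 * Y'" using pY by (rule dvdE)
  \<comment> \<open>\<open>(X', Y')\<close> lies on the curve \<open>X\<^sup>b\<^sup>2 y\<^sup>b\<^sup>1 = Y\<^sup>b\<^sup>1 x\<^sup>b\<^sup>2\<close> through the origin and \<open>(X, Y)\<close>\<close>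
  define a where "a = (rat_of_int (int X ^ b2), rat_of_int (int Y ^ b1))"
  have X': "X' \<ge> 1" and Y': "Y' \<ge> 1" using X Y XX YY by (auto intro: Nat.gr0I)
  have "2 * X' \<le> p ^ b1 * X'"
    using b1 prime_ge_2_nat[OF p] by (intro mult_right_mono) (auto intro: order.trans[OF _ self_le_power])
  then have "X' < X" using X' XX by linarith
  moreover have "Y' \<le> Y" using YY prime_gt_0_nat[OF p] by simp
  ultimately have box: "in_box (int X, int Y) (0, 0) (int X', int Y')" by (simp add: in_box_def)
  have "(p ^ b1 * X') ^ b2 * Y' ^ b1 = (p ^ b2 * Y') ^ b1 * X' ^ b2"
    by (simp add: power_mult_distrib flip: power_mult) (simp add: ac_simps)
  then have R: "on_curve (b1, b2) a (0, 0) (int X', int Y')"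
    unfolding on_curve_def a_def XX YY by (simp flip: of_nat_power of_nat_mult of_int_mult)
  have P: "on_curve (b1, b2) a (0, 0) (int X, int Y)" and a: "a \<noteq> (0, 0)"
    using X by (simp_all add: on_curve_def a_def mult.commute)
  have "(int X', int Y') \<noteq> (int X, int Y)" "(int X', int Y') \<noteq> (0, 0)"
    using \<open>X' < X\<close> X' by auto
  then show False using vis a P R box unfolding b_visible_def b_visible_from_def by blast
qed

lemma b_visible_if_no_prime_power_dvd:
  fixes X Y b1 b2 :: nat
  assumes cop: "coprime b1 b2" and b1: "b1 \<ge> 1" and b2: "b2 \<ge> 1" and X: "X \<ge> 1" and Y: "Y \<ge> 1"
    and no_prime: "\<not> (\<exists>p. prime p \<and> p ^ b1 dvd X \<and> p ^ b2 dvd Y)"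
  shows "b_visible (b1, b2) (int X, int Y)"
proof (rule ccontr)
  assume "\<not> b_visible (b1, b2) (int X, int Y)"
  then obtain a u' v' where a: "a \<noteq> (0, 0)" and P: "on_curve (b1, b2) a (0, 0) (int X, int Y)"
    and RP: "(u', v') \<noteq> (int X, int Y)" and R0: "(u', v') \<noteq> (0, 0)"
    and R: "on_curve (b1, b2) a (0, 0) (u', v')" and box: "in_box (int X, int Y) (0, 0) (u', v')"
    using X unfolding b_visible_def b_visible_from_def by fastforce
  obtain u v where uv: "u' = int u" "v' = int v" "u \<le> X" "v \<le> Y"
    using box unfolding in_box_def by simp (metis nonneg_int_cases)
  have "v' ^ b1 * int X ^ b2 = int Y ^ b1 * u' ^ b2"
    using on_curve_origin_cross_eq[OF a _ P R] X by simp
  then have eq: "v ^ b1 * X ^ b2 = Y ^ b1 * u ^ b2"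
    unfolding uv by (simp flip: of_nat_power of_nat_mult)
  have "u \<noteq> 0"
  proof
    assume "u = 0"
    then have "v = 0" using eq b2 X by (simp add: power_0_left)
    with \<open>u = 0\<close> R0 uv show False by simp
  qed
  moreover have "v \<noteq> 0"
  proof
    assume "v = 0"
    then have "u = 0" using eq b1 Y by (simp add: power_0_left)
    with \<open>v = 0\<close> R0 uv show False by simp
  qed
  ultimately have "\<exists>p. prime p \<and> p ^ b1 dvd X \<and> p ^ b2 dvd Y"
    using prime_power_dvd_of_curve_point[OF cop b1 _ _ \<open>u \<le> X\<close> \<open>v \<le> Y\<close> _ eq] RP uv by auto
  with no_prime show False ..
qed

lemma b_visible_iff_no_prime_power_dvd:
  fixes X Y b1 b2 :: nat
  assumes "coprime b1 b2" "b1 \<ge> 1" "b2 \<ge> 1" "X \<ge> 1" "Y \<ge> 1"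
  shows "b_visible (b1, b2) (int X, int Y) \<longleftrightarrow> \<not> (\<exists>p. prime p \<and> p ^ b1 dvd X \<and> p ^ b2 dvd Y)"
  using not_b_visible_if_prime_power_dvd[OF assms(2,4,5)] b_visible_if_no_prime_power_dvd[OF assms]
  by auto

section \<open>Power-free integers and the zeta function\<close>

lemma inverse_power_le_inverse_power:
  assumes "s \<le> t"
  shows "1 / real (Suc n) ^ t \<le> 1 / real (Suc n) ^ s"
  using assms by (intro divide_left_mono power_increasing) auto

lemma summable_zeta_terms:
  assumes "s \<ge> 2"
  shows "summable (\<lambda>n. 1 / real (Suc n) ^ s)"
proof (rule summable_comparison_test[OF _ summable_Suc_iff[THEN iffD2]])
  show "summable (\<lambda>n. 1 / real n ^ 2)"
    using inverse_power_summable[of 2] by (simp add: inverse_eq_divide)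
qed (use inverse_power_le_inverse_power[OF assms] in auto)

lemma sum_le_zeta:
  assumes "s \<ge> 2"
  shows "(\<Sum>m\<in>{1..n}. 1 / real m ^ s) \<le> zeta s"
proof -
  have "(\<Sum>m\<in>{1..n}. 1 / real m ^ s) = (\<Sum>m<n. 1 / real (Suc m) ^ s)"
    by (simp add: sum.atLeast1_atMost_eq)
  also have "\<dots> \<le> zeta s"
    unfolding zeta_def by (rule sum_le_suminf[OF summable_zeta_terms[OF assms]]) auto
  finally show ?thesis .
qed

lemma zeta_ge_1:
  assumes "s \<ge> 2"
  shows "zeta s \<ge> 1"
  using sum_le_zeta[OF assms, of 1] by simp

lemma zeta_antimono:
  assumes "2 \<le> s" "s \<le> t"
  shows "zeta t \<le> zeta s"
  unfolding zeta_def using assms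
  by (intro suminf_le inverse_power_le_inverse_power summable_zeta_terms) auto

lemma zeta_2: "zeta 2 = pi ^ 2 / 6"
  using inverse_squares_sums unfolding zeta_def by (simp add: sums_iff add.commute)

definition power_free :: "nat \<Rightarrow> nat \<Rightarrow> bool" where
  "power_free k a \<longleftrightarrow> \<not> (\<exists>p. prime p \<and> p ^ k dvd a)"

definition power_free_count :: "nat \<Rightarrow> nat \<Rightarrow> nat" where
  "power_free_count k n = card {a\<in>{1..n}. power_free k a}"

lemma power_free_count_le: "power_free_count k n \<le> n"
proof -
  have "power_free_count k n \<le> card {1..n}" unfolding power_free_count_def by (rule card_mono) auto
  then show ?thesis by simp
qed

lemma card_multiples_le:
  assumes "d \<ge> (1::nat)"
  shows "real (card {i\<in>{1..n}. d dvd i}) \<le> real n / real d"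
proof -
  have "{i\<in>{1..n}. d dvd i} \<subseteq> (\<lambda>q. d * q) ` {1..n div d}"
  proof
    fix i assume i: "i \<in> {i\<in>{1..n}. d dvd i}"
    then obtain q where q: "i = d * q" by auto
    have "q \<ge> 1" using i q by (cases "q = 0") auto
    moreover have "q \<le> n div d" using i q assms div_le_mono[of "d * q" n d] by auto
    ultimately show "i \<in> (\<lambda>q. d * q) ` {1..n div d}" using q by auto
  qed
  then have "card {i\<in>{1..n}. d dvd i} \<le> card ((\<lambda>q. d * q) ` {1..n div d})" by (intro card_mono) auto
  also have "\<dots> \<le> n div d" using card_image_le[of "{1..n div d}" "\<lambda>q. d * q"] by simp
  finally have "real (card {i\<in>{1..n}. d dvd i}) \<le> real (n div d)" by (simp only: of_nat_le_iff)
  also have "\<dots> \<le> real n / real d" by (rule of_nat_div_le_of_nat)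
  finally show ?thesis .
qed

lemma sum_inverse_squares_tail_le:
  assumes "N \<ge> (1::nat)"
  shows "(\<Sum>m\<in>{N+1..n}. 1 / real m ^ 2) \<le> 1 / real N"
proof -
  \<comment> \<open>telescoping: \<open>1 / m\<^sup>2 \<le> 1 / (m - 1) - 1 / m\<close>\<close>
  have "(\<Sum>m\<in>{N+1..n}. 1 / real m ^ 2) \<le> 1 / real N - 1 / real n" if "n \<ge> N" for n
    using that
  proof (induction n rule: dec_induct)
    case (step n)
    have n: "real n \<ge> 1" using step assms by simp
    have "1 / real (Suc n) ^ 2 \<le> 1 / (real n * real (Suc n))"
      using n by (intro divide_left_mono) (auto simp: power2_eq_square intro!: mult_right_mono)
    also have "\<dots> = 1 / real n - 1 / real (Suc n)" using n by (simp add: field_simps)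
    finally show ?case using step by simp
  qed simp
  note telescope = this
  show ?thesis
  proof (cases "n \<ge> N")
    case True
    have "0 \<le> 1 / real n" by simp
    then show ?thesis using telescope[OF True] by linarith
  qed simp
qed

lemma card_large_prime_power_multiples_le:
  assumes N: "N \<ge> (1::nat)" and k: "k \<ge> 2"
  shows "real (card {i\<in>{1..n}. \<exists>p. prime p \<and> N < p \<and> p ^ k dvd i}) \<le> real n / real N"
proof -
  have "{i\<in>{1..n}. \<exists>p. prime p \<and> N < p \<and> p ^ k dvd i} \<subseteq> (\<Union>m\<in>{N+1..n}. {i\<in>{1..n}. m ^ 2 dvd i})"
  proof
    fix i assume "i \<in> {i\<in>{1..n}. \<exists>p. prime p \<and> N < p \<and> p ^ k dvd i}"
    then obtain p where i: "i \<in> {1..n}" and p: "prime p" "N < p" "p ^ k dvd i" by blast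
    have p2: "p ^ 2 dvd i" using k p(3) by (meson dvd_trans le_imp_power_dvd)
    have "p \<le> p ^ 2" by (simp add: power2_eq_square)
    also have "\<dots> \<le> n" using p2 i by (auto dest: dvd_imp_le)
    finally show "i \<in> (\<Union>m\<in>{N+1..n}. {i\<in>{1..n}. m ^ 2 dvd i})" using p p2 i by auto
  qed
  then have "card {i\<in>{1..n}. \<exists>p. prime p \<and> N < p \<and> p ^ k dvd i}
      \<le> card (\<Union>m\<in>{N+1..n}. {i\<in>{1..n}. m ^ 2 dvd i})"
    by (intro card_mono) auto
  also have "\<dots> \<le> (\<Sum>m\<in>{N+1..n}. card {i\<in>{1..n}. m ^ 2 dvd i})"
    by (rule card_UN_le) simp
  finally have "real (card {i\<in>{1..n}. \<exists>p. prime p \<and> N < p \<and> p ^ k dvd i})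
      \<le> (\<Sum>m\<in>{N+1..n}. real (card {i\<in>{1..n}. m ^ 2 dvd i}))"
    by (simp flip: of_nat_sum)
  also have "\<dots> \<le> (\<Sum>m\<in>{N+1..n}. real n * (1 / real m ^ 2))"
    using N by (intro sum_mono order.trans[OF card_multiples_le]) auto
  also have "\<dots> \<le> real n * (1 / real N)"
    unfolding sum_distrib_left[symmetric] by (rule mult_left_mono[OF sum_inverse_squares_tail_le[OF N]]) simp
  finally show ?thesis by simp
qed

lemma power_free_decomposition:
  assumes k: "k \<ge> 1" and i: "i \<ge> 1"
  obtains a m where "i = a * m ^ k" "m \<ge> 1" "power_free k a"
proof -
  define S where "S = {m. 1 \<le> m \<and> m ^ k dvd i}"
  have "S \<subseteq> {..i}"
  proof
    fix m assume "m \<in> S"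
    then have "m \<le> m ^ k" "m ^ k \<le> i" using i k by (auto simp: S_def self_le_power dvd_imp_le)
    then show "m \<in> {..i}" by simp
  qed
  then have "finite S" by (rule finite_subset) simp
  moreover have "1 \<in> S" by (simp add: S_def)
  ultimately have mS: "Max S \<in> S" and max: "\<And>m'. m' \<in> S \<Longrightarrow> m' \<le> Max S" by (auto intro: Max_in)
  define m where "m = Max S"
  obtain a where a: "i = a * m ^ k" using mS unfolding S_def m_def by (auto simp: mult.commute)
  have m: "m \<ge> 1" using mS by (simp add: S_def m_def)
  \<comment> \<open>a prime power \<open>p\<^sup>k\<close> dividing \<open>a\<close> would make \<open>p m\<close> a larger element of \<open>S\<close>\<close>
  have "power_free k a"
  proof (rule ccontr)
    assume "\<not> power_free k a"
    then obtain p b where p: "prime p" and b: "a = p ^ k * b" by (auto simp: power_free_def)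
    have "(p * m) ^ k dvd i" using a b by (simp add: power_mult_distrib mult_ac)
    then have "p * m \<in> S" using p m by (simp add: S_def prime_gt_0_nat Suc_le_eq)
    then have "p * m \<le> m" using max by (simp add: m_def)
    with prime_gt_1_nat[OF p] m show False by simp
  qed
  with a m that show thesis by blast
qed

lemma le_sum_power_free_count:
  assumes k: "k \<ge> 1"
  shows "n \<le> (\<Sum>m\<in>{1..n}. power_free_count k (n div m ^ k))"
proof -
  have "{1..n} \<subseteq> (\<Union>m\<in>{1..n}. (\<lambda>a. a * m ^ k) ` {a\<in>{1..n div m ^ k}. power_free k a})"
  proof
    fix i assume i: "i \<in> {1..n}"
    then obtain a m where a: "i = a * m ^ k" and m: "m \<ge> 1" and "power_free k a"
      using power_free_decomposition[OF k] by auto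
    moreover have "a \<ge> 1" using a i by (cases "a = 0") auto
    moreover have "a \<le> n div m ^ k" using a i m div_le_mono[of i n "m ^ k"] by simp
    moreover have "m \<le> n"
    proof -
      have "m \<le> m ^ k" using m k by (simp add: self_le_power)
      also have "\<dots> \<le> i" using a i by (simp add: dvd_imp_le)
      finally show ?thesis using i by simp
    qed
    ultimately show "i \<in> (\<Union>m\<in>{1..n}. (\<lambda>a. a * m ^ k) ` {a\<in>{1..n div m ^ k}. power_free k a})"
      by (intro UN_I[of m] image_eqI[of _ _ a]) auto
  qed
  then have "card {1..n} \<le> card (\<Union>m\<in>{1..n}. (\<lambda>a. a * m ^ k) ` {a\<in>{1..n div m ^ k}. power_free k a})"
    by (intro card_mono) auto
  also have "\<dots> \<le> (\<Sum>m\<in>{1..n}. card ((\<lambda>a. a * m ^ k) ` {a\<in>{1..n div m ^ k}. power_free k a}))"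
    by (rule card_UN_le) simp
  also have "\<dots> \<le> (\<Sum>m\<in>{1..n}. power_free_count k (n div m ^ k))"
    unfolding power_free_count_def by (intro sum_mono card_image_le) simp
  finally show ?thesis by simp
qed

lemma power_free_count_linear_bound:
  assumes k: "k \<ge> 2" and c: "0 \<le> c"
    and count_le: "\<And>n. real (power_free_count k n) \<le> c * real n + K" and q: "q \<ge> 1"
  shows "real q * (1 - c * zeta k) \<le> K"
proof -
  have K: "0 \<le> K" using count_le[of 0] power_free_count_le[of k 0] by simp
  \<comment> \<open>cover \<open>{1..q\<^sup>2}\<close>; the terms with \<open>m > q\<close> vanish, so \<open>K\<close> is paid only \<open>q\<close> times\<close>
  let ?n = "q\<^sup>2"
  have term_le: "real (power_free_count k (?n div m ^ k))
      \<le> c * real ?n * (1 / real m ^ k) + (if m \<le> q then K else 0)" if m: "m \<in> {1..?n}" for m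
  proof (cases "m \<le> q")
    case True
    have "c * real (?n div m ^ k) \<le> c * (real ?n / real (m ^ k))"
      by (rule mult_left_mono[OF of_nat_div_le_of_nat c(1)])
    then show ?thesis using True count_le[of "?n div m ^ k"] by simp
  next
    case False
    have "q\<^sup>2 < m\<^sup>2" using False by (simp add: power_strict_mono)
    also have "m\<^sup>2 \<le> m ^ k" using m k by (intro power_increasing) auto
    finally show ?thesis using False c power_free_count_le[of k 0] by simp
  qed
  have "real ?n \<le> (\<Sum>m\<in>{1..?n}. real (power_free_count k (?n div m ^ k)))"
    using le_sum_power_free_count[of k ?n] k by (simp flip: of_nat_sum)
  also have "\<dots> \<le> (\<Sum>m\<in>{1..?n}. c * real ?n * (1 / real m ^ k) + (if m \<le> q then K else 0))"
    by (rule sum_mono) (rule term_le)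
  also have "\<dots> = c * real ?n * (\<Sum>m\<in>{1..?n}. 1 / real m ^ k) + K * real (card ({1..?n} \<inter> {m. m \<le> q}))"
    by (simp add: sum.distrib sum_distrib_left sum.If_cases mult.commute)
  also have "\<dots> \<le> c * real ?n * zeta k + K * real q"
  proof (intro add_mono mult_left_mono)
    show "(\<Sum>m\<in>{1..?n}. 1 / real m ^ k) \<le> zeta k" using k by (rule sum_le_zeta)
    have "card ({1..?n} \<inter> {m. m \<le> q}) \<le> card {1..q}" by (rule card_mono) auto
    then show "real (card ({1..?n} \<inter> {m. m \<le> q})) \<le> real q" by simp
  qed (use c K in auto)
  finally have "real q * (real q * (1 - c * zeta k)) \<le> real q * K"
    by (simp add: power2_eq_square algebra_simps)
  then show ?thesis using q by simp
qed

lemma power_free_count_not_below_zeta_density: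
  assumes k: "k \<ge> 2" and c: "0 \<le> c" "c * zeta k < 1"
    and count_le: "\<And>n. real (power_free_count k n) \<le> c * real n + K"
  shows False
proof -
  have K: "0 \<le> K" using count_le[of 0] power_free_count_le[of k 0] by simp
  obtain q :: nat where q: "K / (1 - c * zeta k) < real q" using reals_Archimedean2 by blast
  have "0 \<le> K / (1 - c * zeta k)" using K c by simp
  then have "q \<ge> 1" using q by (cases q) auto
  then have "real q * (1 - c * zeta k) \<le> K" by (rule power_free_count_linear_bound[OF k c(1) count_le])
  moreover have "K < real q * (1 - c * zeta k)" using q c by (simp add: divide_less_eq)
  ultimately show False by simp
qed

lemma power_free_density_lower_bound:
  fixes A :: "nat \<Rightarrow> real"
  assumes k: "k \<ge> 2" and lim: "A \<longlonglongrightarrow> L" and nonneg: "\<And>n. A n \<ge> 0"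
    and count_le: "\<And>n. real (power_free_count k n) \<le> real n * A n + K"
  shows "L \<ge> 1 / zeta k"
proof (rule ccontr)
  assume "\<not> ?thesis"
  then have L: "L < 1 / zeta k" by simp
  have "zeta k \<ge> 1" using k by (rule zeta_ge_1)
  have "L \<ge> 0" using lim nonneg by (intro LIMSEQ_le_const[OF lim]) auto
  define c where "c = (L + 1 / zeta k) / 2"
  have c: "0 \<le> c" "c * zeta k < 1" and "L < c"
    using L \<open>L \<ge> 0\<close> \<open>zeta k \<ge> 1\<close> by (auto simp: c_def field_simps)
  obtain n0 where n0: "\<And>n. n \<ge> n0 \<Longrightarrow> A n < c"
    using order_tendstoD(2)[OF lim \<open>L < c\<close>] unfolding eventually_sequentially by blast
  have "real (power_free_count k n) \<le> c * real n + (K + real n0)" for n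
  proof (cases "n \<ge> n0")
    case True
    have "real n * A n \<le> real n * c" using n0[OF True] by (intro mult_left_mono) auto
    then show ?thesis using count_le[of n] by (simp add: mult.commute)
  next
    case False
    then have "real (power_free_count k n) \<le> real n0" using power_free_count_le[of k n] by simp
    moreover have "0 \<le> K" using count_le[of 0] power_free_count_le[of k 0] by simp
    ultimately show ?thesis using mult_nonneg_nonneg[OF c(1) of_nat_0_le_iff[of n]] by linarith
  qed
  then show False by (rule power_free_count_not_below_zeta_density[OF k c])
qed

section \<open>Characters of independent Bernoulli walks\<close>

definition step_count :: "nat \<Rightarrow> bool \<Rightarrow> nat \<Rightarrow> (nat \<times> nat \<Rightarrow> bool) \<Rightarrow> nat" where
  "step_count j b i \<omega> = card {k. k < i \<and> \<omega> (j, k) = b}"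

lemma walk_pos_eq_step_count:
  "walk_pos \<omega> j i = (int (step_count j True i \<omega>), int (step_count j False i \<omega>))"
  by (simp add: walk_pos_def step_count_def)

lemma step_count_add: "step_count j True i \<omega> + step_count j False i \<omega> = i"
proof -
  have "{k. k < i \<and> \<omega> (j, k) = True} \<union> {k. k < i \<and> \<omega> (j, k) = False} = {..<i}" by auto
  then show ?thesis unfolding step_count_def by (subst card_Un_disjoint[symmetric]) auto
qed

lemma integral_bernoulli_pmf:
  fixes g :: "bool \<Rightarrow> 'a::{banach, second_countable_topology, real_algebra_1}"
  assumes "0 \<le> p" "p \<le> 1"
  shows "(\<integral>x. g x \<partial>measure_pmf (bernoulli_pmf p)) = of_real p * g True + of_real (1 - p) * g False"
  using assms by (subst integral_measure_pmf[of UNIV]) (auto simp: UNIV_bool scaleR_conv_of_real)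

lemma sum_root_of_unity_powers:
  assumes m: "m \<ge> 1"
  shows "(\<Sum>t<m. (exp (2 * of_real pi * \<i> / of_nat m) ^ t) ^ x) = (if m dvd x then of_nat m else 0)"
proof -
  have exp_pow: "exp (2 * of_real pi * \<i> / of_nat m) ^ y = exp (2 * of_real pi * \<i> * of_nat y / of_nat m)" for y
    by (simp flip: exp_of_nat_mult add: algebra_simps)
  let ?w = "exp (2 * of_real pi * \<i> / of_nat m) ^ x"
  have "?w = 1 \<longleftrightarrow> m dvd x" unfolding exp_pow using complex_root_unity_eq_1[OF m] by simp
  moreover have "?w ^ m = exp (2 * of_real pi * \<i> / of_nat m) ^ (m * x)"
    by (simp add: power_mult[symmetric] mult.commute)
  then have "?w ^ m = 1" unfolding exp_pow using complex_root_unity_eq_1[OF m, of "m * x"] by simp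
  moreover have "(\<Sum>t<m. (exp (2 * of_real pi * \<i> / of_nat m) ^ t) ^ x) = (\<Sum>t<m. ?w ^ t)"
    by (simp add: power_mult[symmetric] mult.commute)
  ultimately show ?thesis by (simp add: sum_gp_strict)
qed

locale bernoulli_walks =
  fixes r :: nat and \<alpha> :: "nat \<Rightarrow> real"
  assumes \<alpha>_pos: "\<And>j. j \<in> {1..r} \<Longrightarrow> 0 < \<alpha> j"
    and \<alpha>_less_1: "\<And>j. j \<in> {1..r} \<Longrightarrow> \<alpha> j < 1"
begin

abbreviation "M \<equiv> walk_space r \<alpha>"

lemma prob_space_walk_space: "prob_space M"
  unfolding walk_space_def by (rule prob_space_PiM) (simp add: prob_space_measure_pmf)

lemma measurable_coordinate:
  assumes "c \<in> {1..r} \<times> UNIV"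
  shows "(\<lambda>\<omega>. f (\<omega> c)) \<in> borel_measurable M"
proof -
  have "f \<in> borel_measurable (measure_pmf (bernoulli_pmf (\<alpha> (fst c))))"
    by (subst measurable_cong_sets[OF sets_measure_pmf_count_space refl]) simp
  then show ?thesis unfolding walk_space_def
    by (rule measurable_compose[OF measurable_component_singleton[OF assms]])
qed

lemma sets_coordinate:
  assumes "c \<in> {1..r} \<times> UNIV"
  shows "{\<omega>\<in>space M. P (\<omega> c)} \<in> sets M"
proof -
  have "(\<lambda>\<omega>. \<omega> c) \<in> measurable M (measure_pmf (bernoulli_pmf (\<alpha> (fst c))))"
    unfolding walk_space_def by (rule measurable_component_singleton[OF assms])
  from measurable_sets[OF this, of "{x. P x}"] show ?thesis by (simp add: vimage_def Int_def conj_commute)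
qed

lemma integral_prod_coordinates:
  fixes f :: "nat \<times> nat \<Rightarrow> bool \<Rightarrow> complex"
  assumes J: "finite J" "J \<subseteq> {1..r} \<times> UNIV"
  shows "(\<integral>\<omega>. (\<Prod>c\<in>J. f c (\<omega> c)) \<partial>M)
       = (\<Prod>c\<in>J. of_real (\<alpha> (fst c)) * f c True + of_real (1 - \<alpha> (fst c)) * f c False)"
proof -
  let ?B = "\<lambda>c::nat \<times> nat. measure_pmf (bernoulli_pmf (\<alpha> (fst c)))"
  interpret product_prob_space ?B "{1..r} \<times> UNIV"
    by (rule product_prob_spaceI) (simp add: prob_space_measure_pmf)
  have "(\<integral>\<omega>. (\<Prod>c\<in>J. f c (\<omega> c)) \<partial>M)
      = (\<integral>\<omega>. (\<Prod>c\<in>J. f c (\<omega> c)) \<partial>distr (PiM ({1..r} \<times> UNIV) ?B) (PiM J ?B) (\<lambda>x. restrict x J))"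
    by (subst integral_distr[OF measurable_restrict_subset[OF J(2)]])
       (auto simp: walk_space_def intro!: Bochner_Integration.integral_cong)
  also have "\<dots> = (\<integral>\<omega>. (\<Prod>c\<in>J. f c (\<omega> c)) \<partial>PiM J ?B)"
    using distr_PiM_restrict_finite[OF J] by simp
  also have "\<dots> = (\<Prod>c\<in>J. \<integral>x. f c x \<partial>?B c)"
    by (rule product_integral_prod) (auto intro!: integrable_measure_pmf_finite simp: J)
  also have "\<dots> = (\<Prod>c\<in>J. of_real (\<alpha> (fst c)) * f c True + of_real (1 - \<alpha> (fst c)) * f c False)"
    using J \<alpha>_pos \<alpha>_less_1 by (intro prod.cong refl integral_bernoulli_pmf) (force simp: less_imp_le)+
  finally show ?thesis .
qed

lemma integrable_bounded:
  fixes f :: "(nat \<times> nat \<Rightarrow> bool) \<Rightarrow> 'b::{banach,second_countable_topology}"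
  assumes "f \<in> borel_measurable M" "\<And>\<omega>. norm (f \<omega>) \<le> B"
  shows "integrable M f"
proof -
  interpret prob_space M by (rule prob_space_walk_space)
  show ?thesis by (rule integrable_const_bound[where B = B]) (use assms in auto)
qed

definition walk_char :: "(nat \<Rightarrow> bool \<Rightarrow> complex) \<Rightarrow> nat \<Rightarrow> (nat \<times> nat \<Rightarrow> bool) \<Rightarrow> complex" where
  "walk_char \<psi> i \<omega> = (\<Prod>c\<in>{1..r} \<times> {..<i}. \<psi> (fst c) (\<omega> c))"

definition char_mean :: "(nat \<Rightarrow> bool \<Rightarrow> complex) \<Rightarrow> complex" where
  "char_mean \<psi> = (\<Prod>j\<in>{1..r}. of_real (\<alpha> j) * \<psi> j True + of_real (1 - \<alpha> j) * \<psi> j False)"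

definition unimodular :: "(nat \<Rightarrow> bool \<Rightarrow> complex) \<Rightarrow> bool" where
  "unimodular \<psi> \<longleftrightarrow> (\<forall>j\<in>{1..r}. \<forall>b. cmod (\<psi> j b) = 1)"

lemma borel_measurable_walk_char [measurable]: "walk_char \<psi> i \<in> borel_measurable M"
  unfolding walk_char_def by (intro borel_measurable_prod measurable_coordinate) auto

lemma cnj_walk_char: "cnj (walk_char \<psi> i \<omega>) = walk_char (\<lambda>j b. cnj (\<psi> j b)) i \<omega>"
  unfolding walk_char_def by simp

lemma borel_measurable_cnj_walk_char [measurable]: "(\<lambda>\<omega>. cnj (walk_char \<psi> i \<omega>)) \<in> borel_measurable M"
  unfolding cnj_walk_char by measurable

lemma norm_walk_char: "unimodular \<psi> \<Longrightarrow> cmod (walk_char \<psi> i \<omega>) = 1"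
  unfolding walk_char_def unimodular_def by (auto simp flip: prod_norm intro!: prod.neutral)

lemma walk_char_mult_cnj:
  assumes "unimodular \<psi>" "i' \<le> i"
  shows "walk_char \<psi> i \<omega> * cnj (walk_char \<psi> i' \<omega>) = (\<Prod>c\<in>{1..r} \<times> {i'..<i}. \<psi> (fst c) (\<omega> c))"
proof -
  let ?A = "{1..r} \<times> {..<i'}" and ?B = "{1..r} \<times> {i'..<i}"
  have split: "{1..r} \<times> {..<i} = ?A \<union> ?B" using assms(2) by auto
  have "\<psi> (fst c) (\<omega> c) * cnj (\<psi> (fst c) (\<omega> c)) = 1" if "c \<in> ?A" for c
    using assms(1) that complex_norm_square[of "\<psi> (fst c) (\<omega> c)"] by (auto simp: unimodular_def)
  then have "(\<Prod>c\<in>?A. \<psi> (fst c) (\<omega> c)) * (\<Prod>c\<in>?A. cnj (\<psi> (fst c) (\<omega> c))) = 1"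
    by (simp flip: prod.distrib)
  moreover have "walk_char \<psi> i \<omega> = (\<Prod>c\<in>?A. \<psi> (fst c) (\<omega> c)) * (\<Prod>c\<in>?B. \<psi> (fst c) (\<omega> c))"
    unfolding walk_char_def split by (rule prod.union_disjoint) auto
  ultimately show ?thesis by (simp add: walk_char_def mult_ac)
qed

lemma integral_walk_char_mult_cnj:
  assumes "unimodular \<psi>" "i' \<le> i"
  shows "(\<integral>\<omega>. walk_char \<psi> i \<omega> * cnj (walk_char \<psi> i' \<omega>) \<partial>M) = char_mean \<psi> ^ (i - i')"
proof -
  have "(\<integral>\<omega>. walk_char \<psi> i \<omega> * cnj (walk_char \<psi> i' \<omega>) \<partial>M)
      = (\<integral>\<omega>. (\<Prod>c\<in>{1..r} \<times> {i'..<i}. \<psi> (fst c) (\<omega> c)) \<partial>M)"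
    using walk_char_mult_cnj[OF assms] by simp
  also have "\<dots> = (\<Prod>c\<in>{1..r} \<times> {i'..<i}. of_real (\<alpha> (fst c)) * \<psi> (fst c) True
      + of_real (1 - \<alpha> (fst c)) * \<psi> (fst c) False)"
    by (rule integral_prod_coordinates) auto
  also have "\<dots> = (\<Prod>j\<in>{1..r}. \<Prod>k\<in>{i'..<i}. of_real (\<alpha> j) * \<psi> j True + of_real (1 - \<alpha> j) * \<psi> j False)"
    by (subst prod.cartesian_product) (simp add: split_def)
  also have "\<dots> = char_mean \<psi> ^ (i - i')"
    by (simp add: char_mean_def prod_power_distrib)
  finally show ?thesis .
qed

lemma norm_integral_walk_char_mult_cnj:
  assumes "unimodular \<psi>"
  shows "cmod (\<integral>\<omega>. walk_char \<psi> i \<omega> * cnj (walk_char \<psi> i' \<omega>) \<partial>M)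
          = cmod (char_mean \<psi>) ^ (if i' \<le> i then i - i' else i' - i)"
proof (cases "i' \<le> i")
  case True
  then show ?thesis using integral_walk_char_mult_cnj[OF assms True] by (simp add: norm_power)
next
  case False
  have "(\<integral>\<omega>. walk_char \<psi> i \<omega> * cnj (walk_char \<psi> i' \<omega>) \<partial>M)
      = cnj (\<integral>\<omega>. walk_char \<psi> i' \<omega> * cnj (walk_char \<psi> i \<omega>) \<partial>M)"
    by (simp flip: Bochner_Integration.integral_cnj add: mult.commute)
  then show ?thesis using integral_walk_char_mult_cnj[OF assms, of i i'] False by (simp add: norm_power)
qed

lemma integral_norm_sum_walk_char_le:
  assumes unimod: "unimodular \<psi>" and less: "cmod (char_mean \<psi>) < 1"
  shows "(\<integral>\<omega>. (cmod (\<Sum>i\<in>{1..n}. walk_char \<psi> i \<omega>))\<^sup>2 \<partial>M) \<le> real n * (2 / (1 - cmod (char_mean \<psi>)))"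
proof -
  let ?\<rho> = "cmod (char_mean \<psi>)"
  let ?E = "\<lambda>i i'. \<integral>\<omega>. walk_char \<psi> i \<omega> * cnj (walk_char \<psi> i' \<omega>) \<partial>M"
  have integrable: "integrable M (\<lambda>\<omega>. walk_char \<psi> i \<omega> * cnj (walk_char \<psi> i' \<omega>))" for i i'
    by (rule integrable_bounded[where B = 1], measurable) (simp add: norm_mult norm_walk_char[OF unimod])
  have "complex_of_real (\<integral>\<omega>. (cmod (\<Sum>i\<in>{1..n}. walk_char \<psi> i \<omega>))\<^sup>2 \<partial>M)
      = (\<integral>\<omega>. (\<Sum>i\<in>{1..n}. \<Sum>i'\<in>{1..n}. walk_char \<psi> i \<omega> * cnj (walk_char \<psi> i' \<omega>)) \<partial>M)"
    unfolding integral_complex_of_real[symmetric] complex_norm_square cnj_sum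
    by (simp add: sum_product)
  also have "\<dots> = (\<Sum>i\<in>{1..n}. \<Sum>i'\<in>{1..n}. ?E i i')"
    using integrable by (simp add: Bochner_Integration.integral_sum)
  finally have "(\<integral>\<omega>. (cmod (\<Sum>i\<in>{1..n}. walk_char \<psi> i \<omega>))\<^sup>2 \<partial>M) = Re (\<Sum>i\<in>{1..n}. \<Sum>i'\<in>{1..n}. ?E i i')"
    by (metis Re_complex_of_real)
  also have "\<dots> \<le> cmod (\<Sum>i\<in>{1..n}. \<Sum>i'\<in>{1..n}. ?E i i')"
    by (rule complex_Re_le_cmod)
  also have "\<dots> \<le> (\<Sum>i\<in>{1..n}. \<Sum>i'\<in>{1..n}. cmod (?E i i'))"
    by (rule order.trans[OF norm_sum sum_mono]) (rule norm_sum)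
  also have "\<dots> = (\<Sum>i\<in>{1..n}. \<Sum>i'\<in>{1..n}. ?\<rho> ^ (if i' \<le> i then i - i' else i' - i))"
    by (simp add: norm_integral_walk_char_mult_cnj[OF unimod])
  also have "\<dots> \<le> (\<Sum>i\<in>{1..n}. 2 / (1 - ?\<rho>))"
    using less by (intro sum_mono sum_power_dist_le) auto
  finally show ?thesis by simp
qed

lemma measure_sum_walk_char_large_le:
  assumes unimod: "unimodular \<psi>" and less: "cmod (char_mean \<psi>) < 1" and c: "c > 0"
  shows "measure M {\<omega>\<in>space M. c\<^sup>2 \<le> (cmod (\<Sum>i\<in>{1..n}. walk_char \<psi> i \<omega>))\<^sup>2}
    \<le> real n * (2 / (1 - cmod (char_mean \<psi>))) / c\<^sup>2"
proof -
  interpret prob_space M by (rule prob_space_walk_space)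
  have "integrable M (\<lambda>\<omega>. (cmod (\<Sum>i\<in>{1..n}. walk_char \<psi> i \<omega>))\<^sup>2)"
  proof (rule integrable_bounded[where B = "(real n)\<^sup>2"])
    fix \<omega>
    have "cmod (\<Sum>i\<in>{1..n}. walk_char \<psi> i \<omega>) \<le> real n"
      using norm_sum[of "\<lambda>i. walk_char \<psi> i \<omega>" "{1..n}"] by (simp add: norm_walk_char[OF unimod])
    then show "norm ((cmod (\<Sum>i\<in>{1..n}. walk_char \<psi> i \<omega>))\<^sup>2) \<le> (real n)\<^sup>2" by (simp add: power_mono)
  qed measurable
  then have "measure M {\<omega>\<in>space M. c\<^sup>2 \<le> (cmod (\<Sum>i\<in>{1..n}. walk_char \<psi> i \<omega>))\<^sup>2}
      \<le> (\<integral>\<omega>. (cmod (\<Sum>i\<in>{1..n}. walk_char \<psi> i \<omega>))\<^sup>2 \<partial>M) / c\<^sup>2"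
    using c by (intro integral_Markov_inequality_measure[where A = "space M"]) auto
  also have "\<dots> \<le> real n * (2 / (1 - cmod (char_mean \<psi>))) / c\<^sup>2"
    by (intro divide_right_mono integral_norm_sum_walk_char_le[OF unimod less]) simp
  finally show ?thesis .
qed

lemma AE_eventually_sum_walk_char_small:
  assumes unimod: "unimodular \<psi>" and less: "cmod (char_mean \<psi>) < 1"
  shows "AE \<omega> in M. eventually
    (\<lambda>m. cmod (\<Sum>i\<in>{1..(Suc m)\<^sup>2}. walk_char \<psi> i \<omega>) < real ((Suc m)\<^sup>2) / real (Suc q)) sequentially"
proof -
  interpret prob_space M by (rule prob_space_walk_space)
  let ?C = "2 / (1 - cmod (char_mean \<psi>))"
  define c where "c m = real ((Suc m)\<^sup>2) / real (Suc q)" for m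
  define A where "A m = {\<omega>\<in>space M. (c m)\<^sup>2 \<le> (cmod (\<Sum>i\<in>{1..(Suc m)\<^sup>2}. walk_char \<psi> i \<omega>))\<^sup>2}" for m
  have c: "c m > 0" for m unfolding c_def by simp
  \<comment> \<open>along the squares \<open>n = (m + 1)\<^sup>2\<close> the bound \<open>n C / c\<^sup>2\<close> is summable in \<open>m\<close>\<close>
  have bound: "measure M (A m) \<le> ?C * real (Suc q) ^ 2 * (1 / real (Suc m) ^ 2)" for m
  proof -
    have "measure M (A m) \<le> real ((Suc m)\<^sup>2) * ?C / (c m)\<^sup>2"
      unfolding A_def using measure_sum_walk_char_large_le[OF unimod less c[of m], where n = "(Suc m)\<^sup>2"] by simp
    also have "\<dots> = ?C * real (Suc q) ^ 2 * (1 / real (Suc m) ^ 2)"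
    proof -
      have "x\<^sup>2 * C / (x\<^sup>2 / y)\<^sup>2 = C * y\<^sup>2 * (1 / x\<^sup>2)" if "x > 0" "y > 0" for x y C :: real
        using that by (simp add: field_simps power2_eq_square)
      from this[of "real (Suc m)" "real (Suc q)" ?C] show ?thesis unfolding c_def by simp
    qed
    finally show ?thesis .
  qed
  have "summable (\<lambda>m. ?C * real (Suc q) ^ 2 * (1 / real (Suc m) ^ 2))"
    by (intro summable_mult summable_zeta_terms) simp
  then have "summable (\<lambda>m. measure M (A m))"
    by (rule summable_comparison_test') (use bound in simp)
  moreover have "A m \<in> sets M" for m unfolding A_def by measurable
  ultimately have "AE \<omega> in M. eventually (\<lambda>m. \<omega> \<in> space M - A m) sequentially"
    by (intro borel_cantelli_AE1) (auto simp: emeasure_eq_measure)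
  then show ?thesis
  proof (rule eventually_mono, elim eventually_mono)
    fix \<omega> m assume "\<omega> \<in> space M - A m"
    then have "\<not> (c m)\<^sup>2 \<le> (cmod (\<Sum>i\<in>{1..(Suc m)\<^sup>2}. walk_char \<psi> i \<omega>))\<^sup>2" unfolding A_def by auto
    then show "cmod (\<Sum>i\<in>{1..(Suc m)\<^sup>2}. walk_char \<psi> i \<omega>) < real ((Suc m)\<^sup>2) / real (Suc q)"
      using c[of m] unfolding c_def by (meson norm_ge_zero power_mono linorder_not_le less_imp_le)
  qed
qed

lemma walk_char_eq_power:
  assumes unimod: "unimodular \<psi>" and mean: "\<not> cmod (char_mean \<psi>) < 1"
  obtains L where "cmod L = 1" "\<And>i \<omega>. walk_char \<psi> i \<omega> = L ^ i"
proof -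
  define f where "f j = of_real (\<alpha> j) * \<psi> j True + of_real (1 - \<alpha> j) * \<psi> j False" for j
  have f_le: "cmod (f j) \<le> 1" if j: "j \<in> {1..r}" for j
  proof -
    have "cmod (f j) \<le> cmod (of_real (\<alpha> j) * \<psi> j True) + cmod (of_real (1 - \<alpha> j) * \<psi> j False)"
      unfolding f_def by (rule norm_triangle_ineq)
    also have "\<dots> = \<alpha> j + (1 - \<alpha> j)"
      using unimod j \<alpha>_pos[OF j] \<alpha>_less_1[OF j] unfolding unimodular_def
      by (simp add: norm_mult del: of_real_diff)
    finally show ?thesis by simp
  qed
  \<comment> \<open>\<open>|char_mean \<psi>| = 1\<close> forces every factor to be a degenerate convex combination\<close>
  have degenerate: "\<psi> j True = \<psi> j False" if j: "j \<in> {1..r}" for j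
  proof (rule unimodular_convex_combination_eq[OF \<alpha>_pos[OF j] \<alpha>_less_1[OF j]])
    show "cmod (\<psi> j True) = 1" "cmod (\<psi> j False) = 1" using unimod j unfolding unimodular_def by auto
    have "(\<Prod>j\<in>{1..r}. cmod (f j)) \<ge> 1" using mean unfolding char_mean_def f_def by (simp add: prod_norm)
    then show "cmod (of_real (\<alpha> j) * \<psi> j True + of_real (1 - \<alpha> j) * \<psi> j False) = 1"
      using prod_ge_1_factor_eq_1[of "{1..r}" "\<lambda>j. cmod (f j)"] f_le j unfolding f_def by auto
  qed
  have "walk_char \<psi> i \<omega> = (\<Prod>j\<in>{1..r}. \<psi> j True) ^ i" for i \<omega>
  proof -
    have "walk_char \<psi> i \<omega> = (\<Prod>c\<in>{1..r} \<times> {..<i}. \<psi> (fst c) True)"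
      unfolding walk_char_def using degenerate by (intro prod.cong refl) (metis (full_types) mem_Times_iff)
    also have "\<dots> = (\<Prod>j\<in>{1..r}. \<Prod>k\<in>{..<i}. \<psi> j True)"
      by (subst prod.cartesian_product) (simp add: split_def)
    finally show ?thesis by (simp add: prod_power_distrib)
  qed
  moreover have "cmod (\<Prod>j\<in>{1..r}. \<psi> j True) = 1"
    using unimod unfolding unimodular_def by (simp flip: prod_norm)
  ultimately show ?thesis using that by blast
qed

definition ae_cesaro_convergent :: "(nat \<Rightarrow> (nat \<times> nat \<Rightarrow> bool) \<Rightarrow> complex) \<Rightarrow> bool" where
  "ae_cesaro_convergent W \<longleftrightarrow> (AE \<omega> in M. convergent (\<lambda>n. (\<Sum>i\<in>{1..n}. W i \<omega>) / of_nat n))"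

lemma ae_cesaro_convergent_walk_char:
  assumes unimod: "unimodular \<psi>"
  shows "ae_cesaro_convergent (walk_char \<psi>)"
proof (cases "cmod (char_mean \<psi>) < 1")
  case True
  have "AE \<omega> in M. \<forall>q. eventually
      (\<lambda>m. cmod (\<Sum>i\<in>{1..(Suc m)\<^sup>2}. walk_char \<psi> i \<omega>) < real ((Suc m)\<^sup>2) / real (Suc q)) sequentially"
    unfolding AE_all_countable using AE_eventually_sum_walk_char_small[OF unimod True] by blast
  then show ?thesis unfolding ae_cesaro_convergent_def
  proof (rule eventually_mono)
    fix \<omega> assume "\<forall>q. eventually
      (\<lambda>m. cmod (\<Sum>i\<in>{1..(Suc m)\<^sup>2}. walk_char \<psi> i \<omega>) < real ((Suc m)\<^sup>2) / real (Suc q)) sequentially"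
    then have "(\<lambda>n. (\<Sum>i\<in>{1..n}. walk_char \<psi> i \<omega>) / of_nat n) \<longlonglongrightarrow> 0"
      by (intro cesaro_null_of_squares) (auto simp: norm_walk_char[OF unimod])
    then show "convergent (\<lambda>n. (\<Sum>i\<in>{1..n}. walk_char \<psi> i \<omega>) / of_nat n)" by (rule convergentI)
  qed
next
  case False
  then obtain L where L: "cmod L = 1" "\<And>i \<omega>. walk_char \<psi> i \<omega> = L ^ i"
    using walk_char_eq_power[OF unimod] by blast
  then show ?thesis
    unfolding ae_cesaro_convergent_def L(2) using cesaro_convergent_unimodular_power[OF L(1)] by simp
qed

inductive char_span :: "(nat \<Rightarrow> (nat \<times> nat \<Rightarrow> bool) \<Rightarrow> complex) \<Rightarrow> bool" where
  char_span_walk_char: "unimodular \<psi> \<Longrightarrow> char_span (walk_char \<psi>)"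
| char_span_add: "char_span W \<Longrightarrow> char_span V \<Longrightarrow> char_span (\<lambda>i \<omega>. W i \<omega> + V i \<omega>)"
| char_span_scale: "char_span W \<Longrightarrow> char_span (\<lambda>i \<omega>. c * W i \<omega>)"

lemma ae_cesaro_convergent_char_span: "char_span W \<Longrightarrow> ae_cesaro_convergent W"
proof (induction rule: char_span.induct)
  case (char_span_walk_char \<psi>)
  then show ?case by (rule ae_cesaro_convergent_walk_char)
next
  case (char_span_add W V)
  from char_span_add.IH show ?case unfolding ae_cesaro_convergent_def
    by eventually_elim (simp add: sum.distrib add_divide_distrib convergent_add)
next
  case (char_span_scale W c)
  from char_span_scale.IH show ?case unfolding ae_cesaro_convergent_def
  proof eventually_elim
    case (elim \<omega>)
    then obtain L where "(\<lambda>n. (\<Sum>i\<in>{1..n}. W i \<omega>) / of_nat n) \<longlonglongrightarrow> L"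
      by (auto simp: convergent_def)
    then have "(\<lambda>n. c * ((\<Sum>i\<in>{1..n}. W i \<omega>) / of_nat n)) \<longlonglongrightarrow> c * L"
      by (rule tendsto_mult_left)
    then show ?case by (auto simp: convergent_def sum_distrib_left[symmetric])
  qed
qed

lemma char_span_const: "char_span (\<lambda>i \<omega>. c)"
proof -
  have "char_span (\<lambda>i \<omega>. c * walk_char (\<lambda>_ _. 1) i \<omega>)"
    by (intro char_span_scale char_span_walk_char) (simp add: unimodular_def)
  then show ?thesis by (simp add: walk_char_def)
qed

lemma char_span_mult_walk_char:
  "char_span V \<Longrightarrow> unimodular \<psi> \<Longrightarrow> char_span (\<lambda>i \<omega>. walk_char \<psi> i \<omega> * V i \<omega>)"
proof (induction rule: char_span.induct)
  case (char_span_walk_char \<psi>')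
  have "walk_char \<psi> i \<omega> * walk_char \<psi>' i \<omega> = walk_char (\<lambda>j b. \<psi> j b * \<psi>' j b) i \<omega>" for i \<omega>
    unfolding walk_char_def by (simp add: prod.distrib)
  moreover have "unimodular (\<lambda>j b. \<psi> j b * \<psi>' j b)"
    using char_span_walk_char by (simp add: unimodular_def norm_mult)
  ultimately show ?case by (simp add: char_span.char_span_walk_char)
next
  case (char_span_add W V)
  then show ?case using char_span.char_span_add[OF char_span_add.IH] by (simp add: distrib_left)
next
  case (char_span_scale W c)
  then show ?case using char_span.char_span_scale[OF char_span_scale.IH, of c] by (simp add: ac_simps)
qed

lemma char_span_mult: "char_span W \<Longrightarrow> char_span V \<Longrightarrow> char_span (\<lambda>i \<omega>. W i \<omega> * V i \<omega>)"
proof (induction rule: char_span.induct)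
  case (char_span_walk_char \<psi>)
  then show ?case by (blast intro: char_span_mult_walk_char)
next
  case (char_span_add W V')
  then show ?case using char_span.char_span_add[OF char_span_add.IH] by (simp add: distrib_right)
next
  case (char_span_scale W c)
  then show ?case using char_span.char_span_scale[OF char_span_scale.IH, of c] by (simp add: ac_simps)
qed

lemma char_span_prod:
  "finite A \<Longrightarrow> (\<And>x. x \<in> A \<Longrightarrow> char_span (F x)) \<Longrightarrow> char_span (\<lambda>i \<omega>. \<Prod>x\<in>A. F x i \<omega>)"
proof (induction A rule: finite_induct)
  case empty
  then show ?case using char_span_const[of 1] by simp
next
  case (insert x A)
  then show ?case using char_span_mult[of "F x" "\<lambda>i \<omega>. \<Prod>x\<in>A. F x i \<omega>"] by simp
qed

lemma char_span_sum:
  "finite A \<Longrightarrow> (\<And>x. x \<in> A \<Longrightarrow> char_span (F x)) \<Longrightarrow> char_span (\<lambda>i \<omega>. \<Sum>x\<in>A. F x i \<omega>)"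
proof (induction A rule: finite_induct)
  case empty
  then show ?case using char_span_const[of 0] by simp
next
  case (insert x A)
  then show ?case using char_span_add[of "F x" "\<lambda>i \<omega>. \<Sum>x\<in>A. F x i \<omega>"] by simp
qed

lemma char_span_dvd_step_count:
  assumes j: "j \<in> {1..r}" and m: "m \<ge> 1"
  shows "char_span (\<lambda>i \<omega>. if m dvd step_count j b i \<omega> then 1 else 0)"
proof -
  let ?z = "exp (2 * of_real pi * \<i> / of_nat m)"
  define \<psi> where "\<psi> t j' b' = (if j' = j \<and> b' = b then ?z ^ t else 1)" for t j' b'
  \<comment> \<open>roots-of-unity filter: \<open>\<psi> t\<close> counts the steps of kind \<open>b\<close> of walker \<open>j\<close> in the exponent\<close>
  have "walk_char (\<psi> t) i \<omega> = (?z ^ t) ^ step_count j b i \<omega>" for t i \<omega>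
  proof -
    have "walk_char (\<psi> t) i \<omega> = (\<Prod>c\<in>({1..r} \<times> {..<i}) \<inter> {c. fst c = j \<and> \<omega> c = b}. ?z ^ t)"
      unfolding walk_char_def \<psi>_def by (subst prod.If_cases) auto
    also have "({1..r} \<times> {..<i}) \<inter> {c. fst c = j \<and> \<omega> c = b} = Pair j ` {k. k < i \<and> \<omega> (j, k) = b}"
      using j by auto
    finally show ?thesis by (simp add: card_image inj_on_def step_count_def)
  qed
  moreover have "unimodular (\<psi> t)" for t by (simp add: unimodular_def \<psi>_def norm_power)
  then have "char_span (\<lambda>i \<omega>. (1 / of_nat m) * (\<Sum>t<m. walk_char (\<psi> t) i \<omega>))"
    by (intro char_span_scale char_span_sum char_span_walk_char) auto
  moreover have "(1 / of_nat m) * (\<Sum>t<m. (?z ^ t) ^ s) = (if m dvd s then 1 else 0)" for s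
    using m by (simp add: sum_root_of_unity_powers)
  ultimately show ?thesis by simp
qed

definition avoiding :: "nat \<Rightarrow> bool \<Rightarrow> nat \<Rightarrow> (nat \<times> nat \<Rightarrow> bool) set" where
  "avoiding j b K = {\<omega>\<in>space M. \<forall>k<K. \<omega> (j, k) \<noteq> b}"

lemma sets_avoiding:
  assumes j: "j \<in> {1..r}"
  shows "avoiding j b K \<in> sets M"
proof (induction K)
  case (Suc K)
  have "avoiding j b (Suc K) = avoiding j b K \<inter> {\<omega>\<in>space M. \<omega> (j, K) \<noteq> b}"
    unfolding avoiding_def by (auto simp: less_Suc_eq)
  then show ?case using Suc sets_coordinate[of "(j, K)" "\<lambda>x. x \<noteq> b"] j by auto
qed (simp add: avoiding_def)

lemma measure_avoiding:
  assumes j: "j \<in> {1..r}"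
  shows "measure M (avoiding j b K) = (if b then 1 - \<alpha> j else \<alpha> j) ^ K"
proof -
  let ?q = "if b then 1 - \<alpha> j else \<alpha> j"
  have "complex_of_real (measure M (avoiding j b K)) = (\<integral>\<omega>. complex_of_real (indicator (avoiding j b K) \<omega>) \<partial>M)"
    using sets_avoiding[OF j] by (simp add: Int_absorb2 sets.sets_into_space)
  also have "\<dots> = (\<integral>\<omega>. (\<Prod>c\<in>{j} \<times> {..<K}. if \<omega> c = b then 0 else 1) \<partial>M)"
    by (intro Bochner_Integration.integral_cong refl)
       (auto simp: avoiding_def indicator_def intro!: prod.neutral)
  also have "\<dots> = (\<Prod>c\<in>{j} \<times> {..<K}. of_real (\<alpha> (fst c)) * (if True = b then 0 else 1)
      + of_real (1 - \<alpha> (fst c)) * (if False = b then 0 else 1))"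
    using j by (intro integral_prod_coordinates) auto
  also have "\<dots> = (\<Prod>c\<in>{j} \<times> {..<K}. complex_of_real ?q)"
    by (intro prod.cong refl) auto
  also have "\<dots> = complex_of_real (?q ^ K)" by (simp add: card_cartesian_product)
  finally show ?thesis by (simp only: of_real_eq_iff)
qed

lemma AE_exists_step:
  assumes j: "j \<in> {1..r}"
  shows "AE \<omega> in M. \<exists>k. \<omega> (j, k) = b"
proof -
  interpret prob_space M by (rule prob_space_walk_space)
  define q where "q = (if b then 1 - \<alpha> j else \<alpha> j)"
  have q: "0 \<le> q" "q < 1" using \<alpha>_pos[OF j] \<alpha>_less_1[OF j] unfolding q_def by auto
  define N where "N = {\<omega>\<in>space M. \<forall>k. \<omega> (j, k) \<noteq> b}"
  have "N = (\<Inter>K. avoiding j b K)" by (auto simp: N_def avoiding_def)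
  then have N_sets: "N \<in> sets M" using sets_avoiding[OF j] by auto
  have "measure M N \<le> q ^ K" for K
  proof -
    have "N \<subseteq> avoiding j b K" by (auto simp: N_def avoiding_def)
    then have "measure M N \<le> measure M (avoiding j b K)" by (intro finite_measure_mono sets_avoiding[OF j])
    then show ?thesis by (simp add: measure_avoiding[OF j] q_def)
  qed
  moreover have "(\<lambda>K. q ^ K) \<longlonglongrightarrow> 0" using q by (intro LIMSEQ_power_zero) auto
  ultimately have "measure M N \<le> 0" by (intro LIMSEQ_le_const[of "\<lambda>K. q ^ K"]) auto
  then have "N \<in> null_sets M" using N_sets by (auto simp: emeasure_eq_measure antisym)
  then show ?thesis by (rule AE_I') (auto simp: N_def)
qed

definition off_axes :: "(nat \<times> nat \<Rightarrow> bool) \<Rightarrow> nat \<Rightarrow> bool" where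
  "off_axes \<omega> i \<longleftrightarrow> (\<forall>j\<in>{1..r}. step_count j True i \<omega> \<ge> 1 \<and> step_count j False i \<omega> \<ge> 1)"

lemma AE_eventually_off_axes: "AE \<omega> in M. \<exists>T. \<forall>i\<ge>T. off_axes \<omega> i"
proof -
  have "AE \<omega> in M. \<forall>j\<in>{1..r}. \<forall>b. \<exists>k. \<omega> (j, k) = b"
    by (intro AE_finite_allI AE_all_countable[THEN iffD2] allI AE_exists_step) auto
  then show ?thesis
  proof (rule eventually_mono)
    fix \<omega> :: "nat \<times> nat \<Rightarrow> bool" assume "\<forall>j\<in>{1..r}. \<forall>b. \<exists>k. \<omega> (j, k) = b"
    then obtain k where k: "\<And>j b. j \<in> {1..r} \<Longrightarrow> \<omega> (j, k j b) = b" by metis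
    define T where "T = Suc (\<Sum>j\<in>{1..r}. k j True + k j False)"
    have "off_axes \<omega> i" if "i \<ge> T" for i
      unfolding off_axes_def
    proof (intro ballI conjI)
      fix j assume j: "j \<in> {1..r}"
      have "k j True + k j False < T"
        using member_le_sum[of j "{1..r}" "\<lambda>j. k j True + k j False"] j by (simp add: T_def)
      then have "k j b \<in> {k. k < i \<and> \<omega> (j, k) = b}" for b using k[OF j] \<open>i \<ge> T\<close> by (cases b) auto
      then have "step_count j b i \<omega> > 0" for b
        unfolding step_count_def by (subst card_gt_0_iff) auto
      then show "step_count j True i \<omega> \<ge> 1" "step_count j False i \<omega> \<ge> 1" by (simp_all add: Suc_le_eq)
    qed
    then show "\<exists>T. \<forall>i\<ge>T. off_axes \<omega> i" by blast
  qed
qed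

end

section \<open>Visibility along the walks\<close>

locale visibility_walks = bernoulli_walks +
  fixes b1 b2 :: nat
  assumes coprime_b: "coprime b1 b2" and b1_ge_2: "b1 \<ge> 2" and b2_ge_2: "b2 \<ge> 2"
begin

definition blocked :: "nat \<Rightarrow> nat \<Rightarrow> nat \<Rightarrow> (nat \<times> nat \<Rightarrow> bool) \<Rightarrow> bool" where
  "blocked j p i \<omega> \<longleftrightarrow> p ^ b1 dvd step_count j True i \<omega> \<and> p ^ b2 dvd step_count j False i \<omega>"

definition visible_ind :: "nat \<Rightarrow> (nat \<times> nat \<Rightarrow> bool) \<Rightarrow> real" where
  "visible_ind i \<omega> = (if \<forall>j\<in>{1..r}. b_visible (b1, b2) (walk_pos \<omega> j i) then 1 else 0)"

definition sieved_ind :: "nat \<Rightarrow> nat \<Rightarrow> (nat \<times> nat \<Rightarrow> bool) \<Rightarrow> real" where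
  "sieved_ind N i \<omega> = (if \<forall>j\<in>{1..r}. \<forall>p. prime p \<and> p \<le> N \<longrightarrow> \<not> blocked j p i \<omega> then 1 else 0)"

lemma Rbar_eq_average: "Rbar (b1, b2) r \<omega> n = (\<Sum>i\<in>{1..n}. visible_ind i \<omega>) / real n"
  by (simp add: Rbar_def visible_ind_def)

lemma visible_ind_eq:
  assumes "off_axes \<omega> i"
  shows "visible_ind i \<omega> = (if \<forall>j\<in>{1..r}. \<forall>p. prime p \<longrightarrow> \<not> blocked j p i \<omega> then 1 else 0)"
proof -
  have "b_visible (b1, b2) (walk_pos \<omega> j i) \<longleftrightarrow> (\<forall>p. prime p \<longrightarrow> \<not> blocked j p i \<omega>)" if "j \<in> {1..r}" for j
    using b_visible_iff_no_prime_power_dvd[OF coprime_b, of "step_count j True i \<omega>" "step_count j False i \<omega>"]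
      assms that b1_ge_2 b2_ge_2
    by (auto simp: walk_pos_eq_step_count blocked_def off_axes_def)
  then show ?thesis unfolding visible_ind_def by auto
qed

lemma blocked_dvd: "blocked j p i \<omega> \<Longrightarrow> p ^ min b1 b2 dvd i"
  unfolding blocked_def
  by (metis dvd_add dvd_trans le_imp_power_dvd min.cobounded1 min.cobounded2 step_count_add)

lemma char_span_sieved_ind: "char_span (\<lambda>i \<omega>. complex_of_real (sieved_ind N i \<omega>))"
proof -
  let ?P = "{p. prime p \<and> p \<le> N}"
  have factor: "char_span (\<lambda>i \<omega>. 1 + (-1) * ((if p ^ b1 dvd step_count j True i \<omega> then 1 else 0)
      * (if p ^ b2 dvd step_count j False i \<omega> then 1 else 0)))" if "j \<in> {1..r}" "p \<in> ?P" for j p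
    using that by (intro char_span_add char_span_const char_span_scale char_span_mult char_span_dvd_step_count)
      (auto simp: Suc_le_eq prime_gt_0_nat)
  have "char_span (\<lambda>i \<omega>. \<Prod>j\<in>{1..r}. \<Prod>p\<in>?P. 1 + (-1) * ((if p ^ b1 dvd step_count j True i \<omega> then 1 else 0)
      * (if p ^ b2 dvd step_count j False i \<omega> then 1 else 0)))"
    by (intro char_span_prod factor) auto
  moreover have "(\<Prod>j\<in>{1..r}. \<Prod>p\<in>?P. 1 + (-1) * ((if p ^ b1 dvd step_count j True i \<omega> then 1 else 0)
      * (if p ^ b2 dvd step_count j False i \<omega> then 1 else 0))) = complex_of_real (sieved_ind N i \<omega>)" for i \<omega>
    by (auto simp: sieved_ind_def blocked_def intro!: prod.neutral)
  ultimately show ?thesis by simp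
qed

lemma AE_convergent_sieved_average:
  "AE \<omega> in M. convergent (\<lambda>n. (\<Sum>i\<in>{1..n}. sieved_ind N i \<omega>) / real n)"
  using ae_cesaro_convergent_char_span[OF char_span_sieved_ind[of N]] unfolding ae_cesaro_convergent_def
proof (rule eventually_mono)
  fix \<omega> assume "convergent (\<lambda>n. (\<Sum>i\<in>{1..n}. complex_of_real (sieved_ind N i \<omega>)) / of_nat n)"
  then obtain L where "(\<lambda>n. (\<Sum>i\<in>{1..n}. complex_of_real (sieved_ind N i \<omega>)) / of_nat n) \<longlonglongrightarrow> L"
    by (auto simp: convergent_def)
  then have "(\<lambda>n. Re ((\<Sum>i\<in>{1..n}. complex_of_real (sieved_ind N i \<omega>)) / of_nat n)) \<longlonglongrightarrow> Re L"
    by (rule tendsto_Re)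
  then show "convergent (\<lambda>n. (\<Sum>i\<in>{1..n}. sieved_ind N i \<omega>) / real n)"
    by (auto simp: convergent_def simp flip: of_real_sum)
qed

lemma abs_visible_ind_sub_sieved_ind_le:
  assumes "off_axes \<omega> i"
  shows "\<bar>visible_ind i \<omega> - sieved_ind N i \<omega>\<bar> \<le> (if \<exists>p. prime p \<and> N < p \<and> p ^ min b1 b2 dvd i then 1 else 0)"
proof (cases "\<forall>j\<in>{1..r}. \<forall>p. prime p \<longrightarrow> \<not> blocked j p i \<omega>")
  case True
  then show ?thesis by (simp add: visible_ind_eq[OF assms] sieved_ind_def)
next
  case False
  then obtain j p where j: "j \<in> {1..r}" and p: "prime p" and bad: "blocked j p i \<omega>" by blast
  have "visible_ind i \<omega> = 0" using False by (simp add: visible_ind_eq[OF assms])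
  moreover have "sieved_ind N i \<omega> = 0" if "p \<le> N" using j p bad that by (auto simp: sieved_ind_def)
  moreover have "\<exists>p. prime p \<and> N < p \<and> p ^ min b1 b2 dvd i" if "\<not> p \<le> N"
    using p bad that blocked_dvd by auto
  ultimately show ?thesis by (cases "p \<le> N") (auto simp: sieved_ind_def)
qed

lemma visible_ind_power_free:
  assumes "off_axes \<omega> i" "power_free (min b1 b2) i"
  shows "visible_ind i \<omega> = 1"
  using assms blocked_dvd by (auto simp: visible_ind_eq power_free_def)

lemma Rbar_close_to_sieved_average:
  assumes off: "\<And>i. i \<ge> T \<Longrightarrow> off_axes \<omega> i" and N: "N \<ge> 1" and n: "n \<ge> 1"
  shows "\<bar>Rbar (b1, b2) r \<omega> n - (\<Sum>i\<in>{1..n}. sieved_ind N i \<omega>) / real n\<bar> \<le> real T / real n + 1 / real N"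
proof -
  let ?D = "\<lambda>i. \<exists>p. prime p \<and> N < p \<and> p ^ min b1 b2 dvd i"
  have "\<bar>visible_ind i \<omega> - sieved_ind N i \<omega>\<bar> \<le> (if i < T then 1 else 0) + (if ?D i then 1 else 0)" for i
  proof (cases "i < T")
    case True
    then show ?thesis by (simp add: visible_ind_def sieved_ind_def)
  next
    case False
    then show ?thesis using abs_visible_ind_sub_sieved_ind_le[OF off, of i N] by simp
  qed
  then have "\<bar>\<Sum>i\<in>{1..n}. visible_ind i \<omega> - sieved_ind N i \<omega>\<bar>
      \<le> (\<Sum>i\<in>{1..n}. (if i < T then 1 else 0) + (if ?D i then 1 else 0))"
    by (intro order.trans[OF sum_abs] sum_mono)
  also have "\<dots> = real (card {i\<in>{1..n}. i < T}) + real (card {i\<in>{1..n}. ?D i})"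
    by (simp add: sum.distrib sum_indicator_eq_card)
  also have "\<dots> \<le> real T + real n / real N"
  proof -
    have "card {i\<in>{1..n}. i < T} \<le> card {..<T}" by (rule card_mono) auto
    then show ?thesis using card_large_prime_power_multiples_le[OF N, of "min b1 b2" n] b1_ge_2 b2_ge_2 by simp
  qed
  finally have "\<bar>(\<Sum>i\<in>{1..n}. visible_ind i \<omega>) - (\<Sum>i\<in>{1..n}. sieved_ind N i \<omega>)\<bar> / real n
      \<le> (real T + real n / real N) / real n"
    by (intro divide_right_mono) (simp_all add: sum_subtractf)
  also have "\<dots> = real T / real n + 1 / real N" using n by (simp add: field_simps)
  finally show ?thesis unfolding Rbar_eq_average using n by (simp add: diff_divide_distrib[symmetric])
qed

lemma power_free_count_le_sum_visible:
  assumes off: "\<And>i. i \<ge> T \<Longrightarrow> off_axes \<omega> i"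
  shows "real (power_free_count (min b1 b2) n) \<le> real n * Rbar (b1, b2) r \<omega> n + real T"
proof -
  have pointwise: "(if power_free (min b1 b2) i then 1 else 0) - (if i < T then 1 else 0) \<le> visible_ind i \<omega>" for i
  proof -
    have "visible_ind i \<omega> \<ge> 0" by (simp add: visible_ind_def)
    then show ?thesis using visible_ind_power_free[OF off, of i] by (cases "i < T") auto
  qed
  have "real (power_free_count (min b1 b2) n) - real (card {i\<in>{1..n}. i < T})
      = (\<Sum>i\<in>{1..n}. (if power_free (min b1 b2) i then 1 else 0) - (if i < T then 1 else 0))"
    by (simp add: sum_subtractf sum_indicator_eq_card power_free_count_def)
  also have "\<dots> \<le> (\<Sum>i\<in>{1..n}. visible_ind i \<omega>)" by (rule sum_mono) (rule pointwise)
  finally have "real (power_free_count (min b1 b2) n) - real (card {i\<in>{1..n}. i < T}) \<le> (\<Sum>i\<in>{1..n}. visible_ind i \<omega>)" .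
  moreover have "card {i\<in>{1..n}. i < T} \<le> card {..<T}" by (rule card_mono) auto
  moreover have "(\<Sum>i\<in>{1..n}. visible_ind i \<omega>) = real n * Rbar (b1, b2) r \<omega> n"
    by (cases "n = 0") (auto simp: Rbar_eq_average)
  ultimately show ?thesis by simp
qed

lemma Rbar_convergent_lim_ge:
  assumes off: "\<And>i. i \<ge> T \<Longrightarrow> off_axes \<omega> i"
    and sieved: "\<And>N. convergent (\<lambda>n. (\<Sum>i\<in>{1..n}. sieved_ind N i \<omega>) / real n)"
  shows "convergent (Rbar (b1, b2) r \<omega>) \<and> lim (Rbar (b1, b2) r \<omega>) \<ge> 1 / zeta (min b1 b2)"
proof
  show conv: "convergent (Rbar (b1, b2) r \<omega>)"
    by (rule convergent_approx_by_convergent[OF sieved _ Rbar_close_to_sieved_average[OF off]]) auto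
  have "Rbar (b1, b2) r \<omega> n \<ge> 0" for n
    unfolding Rbar_eq_average by (auto intro!: divide_nonneg_nonneg sum_nonneg simp: visible_ind_def)
  with conv show "lim (Rbar (b1, b2) r \<omega>) \<ge> 1 / zeta (min b1 b2)"
    using b1_ge_2 b2_ge_2 power_free_count_le_sum_visible[OF off]
    by (intro power_free_density_lower_bound) (auto simp: convergent_LIMSEQ_iff)
qed

end

theorem mainTheorem3:
  fixes b1 b2 r :: nat and \<alpha> :: "nat \<Rightarrow> real"
  assumes "gcd b1 b2 = 1"
    and "min b1 b2 \<ge> 2"
    and "r \<ge> 1"
    and "\<forall>j \<in> {1..r}. 0 < \<alpha> j \<and> \<alpha> j < 1"
  shows "(AE \<omega> in walk_space r \<alpha>.
            convergent (Rbar (b1, b2) r \<omega>) \<and>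
            lim (Rbar (b1, b2) r \<omega>) \<ge> 1 / zeta (min b1 b2))
         \<and> 1 / zeta (min b1 b2) \<ge> 1 / zeta 2
         \<and> 1 / zeta 2 = 6 / pi ^ 2"
proof (intro conjI)
  interpret visibility_walks r \<alpha> b1 b2
    using assms by unfold_locales (auto simp: coprime_iff_gcd_eq_1)
  have "AE \<omega> in M. \<forall>N. convergent (\<lambda>n. (\<Sum>i\<in>{1..n}. sieved_ind N i \<omega>) / real n)"
    unfolding AE_all_countable by (intro allI AE_convergent_sieved_average)
  with AE_eventually_off_axes
  show "AE \<omega> in M. convergent (Rbar (b1, b2) r \<omega>) \<and> lim (Rbar (b1, b2) r \<omega>) \<ge> 1 / zeta (min b1 b2)"
    by eventually_elim (metis Rbar_convergent_lim_ge)
  show "1 / zeta (min b1 b2) \<ge> 1 / zeta 2"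
    using assms(2) zeta_ge_1[OF assms(2)] zeta_antimono[OF order.refl assms(2)]
    by (intro divide_left_mono) auto
  show "1 / zeta 2 = 6 / pi ^ 2" by (simp add: zeta_2)
qed

end
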